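(* Let $\hat A$ be a complete discrete valuation ring with maximal ideal $\mathfrak p$, let $n$ be a positive integer, and let $H_n$ be the ideal of $\hat A$ generated by all $x^n-1$ with $x\in\hat A^\times$. Then an ideal $I$ of $\hat A$ is $n$-congruing if and only if $H_n\subseteq I$.
   Context: An ideal $I$ of a commutative ring $R$ is $n$-congruing if for every $a\in R$ there is $N\in\mathbb{N}$ with $a^N(a^n-1)\in I$. *)

theory Defs
  imports Main
begin

definition is_ideal :: "'a::comm_ring_1 set \<Rightarrow> bool" where
  "is_ideal I \<longleftrightarrow> 0 \<in> I \<and> (\<forall>x\<in>I. \<forall>y\<in>I. x + y \<in> I) \<and> (\<forall>r x. x \<in> I \<longrightarrow> r * x \<in> I)"

definition ideal_gen :: "'a::comm_ring_1 set \<Rightarrow> 'a set" where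
  "ideal_gen S = \<Inter>{I. is_ideal I \<and> S \<subseteq> I}"

definition ideal_prod :: "'a::comm_ring_1 set \<Rightarrow> 'a set \<Rightarrow> 'a set" where
  "ideal_prod I J = ideal_gen {x * y | x y. x \<in> I \<and> y \<in> J}"

primrec ideal_pow :: "'a::comm_ring_1 set \<Rightarrow> nat \<Rightarrow> 'a set" where
  "ideal_pow I 0 = UNIV"
| "ideal_pow I (Suc k) = ideal_prod I (ideal_pow I k)"

definition is_maximal_ideal :: "'a::comm_ring_1 set \<Rightarrow> bool" where
  "is_maximal_ideal M \<longleftrightarrow> is_ideal M \<and> M \<noteq> UNIV \<and>
     (\<forall>J. is_ideal J \<and> M \<subseteq> J \<longrightarrow> J = M \<or> J = UNIV)"

definition dvr :: "'a::idom itself \<Rightarrow> bool" where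
  "dvr _ \<longleftrightarrow>
     (\<forall>I::'a set. is_ideal I \<longrightarrow> (\<exists>a. I = {a * r | r. True})) \<and>
     (\<exists>!M::'a set. is_maximal_ideal M) \<and>
     (\<exists>x::'a. x \<noteq> 0 \<and> \<not> x dvd 1)"

definition padic_complete :: "'a::comm_ring_1 set \<Rightarrow> bool" where
  "padic_complete P \<longleftrightarrow>
     (\<forall>f :: nat \<Rightarrow> 'a.
        (\<forall>k. \<exists>N. \<forall>m\<ge>N. \<forall>n\<ge>N. f m - f n \<in> ideal_pow P k) \<longrightarrow>
        (\<exists>x. \<forall>k. \<exists>N. \<forall>n\<ge>N. f n - x \<in> ideal_pow P k))"

definition n_congruing :: "nat \<Rightarrow> 'a::comm_ring_1 set \<Rightarrow> bool" where
  "n_congruing n I \<longleftrightarrow> (\<forall>a. \<exists>N::nat. a ^ N * (a ^ n - 1) \<in> I)"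

definition H_ideal :: "nat \<Rightarrow> 'a::comm_ring_1 set" where
  "H_ideal n = ideal_gen {x ^ n - 1 | x. x dvd 1}"

end

theory Submission
  imports Defs "HOL-Computational_Algebra.Polynomial"
begin

text \<open>For a unit \<open>x\<close>, the factor \<open>x ^ N\<close> in \<open>x ^ N * (x ^ n - 1)\<close> can be cancelled, so an
  \<open>n\<close>-congruing ideal contains every generator of \<open>H\<^sub>n\<close>. Conversely, in a discrete valuation
  ring with uniformizer \<open>p\<close> a nonzero ideal is \<open>(p\<^sup>m)\<close>, and it contains \<open>a\<^sup>m\<close> for every
  non-unit \<open>a\<close>; so only the units need attention, and for them \<open>H\<^sub>n \<subseteq> I\<close> is exactly what is
  needed. The zero ideal does not contain \<open>H\<^sub>n\<close>: the units \<open>1 + p\<^sup>k\<close> are infinitely many,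
  whereas there are only finitely many \<open>n\<close>-th roots of unity.\<close>

lemma is_ideal_mult_right: "is_ideal I \<Longrightarrow> x \<in> I \<Longrightarrow> x * r \<in> I"
  unfolding is_ideal_def by (metis mult.commute)

lemma is_ideal_uminus: "is_ideal I \<Longrightarrow> x \<in> I \<Longrightarrow> - x \<in> I"
  unfolding is_ideal_def by (metis mult_minus1)

lemma is_ideal_one_iff: "is_ideal I \<Longrightarrow> 1 \<in> I \<longleftrightarrow> I = UNIV"
  using is_ideal_mult_right[of I 1] by auto

lemma is_maximal_idealD:
  assumes "is_maximal_ideal M"
  shows "is_ideal M" and "1 \<notin> M"
  using assms is_ideal_one_iff[of M] unfolding is_maximal_ideal_def by auto

lemma ideal_gen_least: "is_ideal I \<Longrightarrow> S \<subseteq> I \<Longrightarrow> ideal_gen S \<subseteq> I"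
  unfolding ideal_gen_def by blast

lemma ideal_gen_superset: "S \<subseteq> ideal_gen S"
  unfolding ideal_gen_def by blast

lemma principal_ideal_eq_multiples: "{a * r | r. True} = {x. a dvd x}"
  by (auto simp: dvd_def)

lemma is_ideal_principal: "is_ideal {a * r | r. True}"
  unfolding principal_ideal_eq_multiples is_ideal_def by auto

lemma is_ideal_Union_chain:
  assumes "C \<noteq> {}" and "\<And>J. J \<in> C \<Longrightarrow> is_ideal J" and "subset.chain UNIV C"
  shows "is_ideal (\<Union>C)"
  unfolding is_ideal_def
proof (intro conjI ballI allI impI)
  show "0 \<in> \<Union>C" using assms(1,2) unfolding is_ideal_def by blast
next
  fix a b assume "a \<in> \<Union>C" "b \<in> \<Union>C"
  then obtain X Y where XY: "X \<in> C" "Y \<in> C" "a \<in> X" "b \<in> Y" by blast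
  with assms(3) have "X \<subseteq> Y \<or> Y \<subseteq> X" unfolding subset.chain_def by blast
  with XY assms(2) show "a + b \<in> \<Union>C" unfolding is_ideal_def by blast
next
  fix r a assume "a \<in> \<Union>C"
  with assms(2) show "r * a \<in> \<Union>C" unfolding is_ideal_def by blast
qed

lemma nonunit_in_maximal_ideal:
  fixes x :: "'a::comm_ring_1"
  assumes "\<not> x dvd 1"
  obtains M where "is_maximal_ideal M" and "x \<in> M"
proof -
  define A where "A = {J::'a set. is_ideal J \<and> x \<in> J \<and> 1 \<notin> J}"
  have "x \<in> {x * r | r. True}" and "1 \<notin> {x * r | r. True}"
    using assms unfolding principal_ideal_eq_multiples by auto
  then have "{x * r | r. True} \<in> A" unfolding A_def using is_ideal_principal by blast
  moreover have "\<Union>C \<in> A" if "C \<noteq> {}" and "subset.chain A C" for C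
  proof -
    have "C \<subseteq> A" and "subset.chain UNIV C"
      using that(2) unfolding subset.chain_def by auto
    then show ?thesis
      using is_ideal_Union_chain[OF that(1)] that(1) unfolding A_def by auto
  qed
  ultimately obtain M where MA: "M \<in> A" and Mmax: "\<forall>X\<in>A. M \<subseteq> X \<longrightarrow> X = M"
    using subset_Zorn_nonempty[of A] by blast
  have "is_maximal_ideal M"
    unfolding is_maximal_ideal_def
  proof (intro conjI allI impI)
    show "is_ideal M" "M \<noteq> UNIV" using MA unfolding A_def by auto
    fix J assume "is_ideal J \<and> M \<subseteq> J"
    then show "J = M \<or> J = UNIV"
      using Mmax MA is_ideal_one_iff[of J] unfolding A_def by blast
  qed
  with MA that show ?thesis unfolding A_def by blast
qed

lemma local_nonunit_in_maximal_ideal: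
  fixes a :: "'a::comm_ring_1"
  assumes "\<exists>!M::'a set. is_maximal_ideal M" and "is_maximal_ideal P" and "\<not> a dvd 1"
  shows "a \<in> P"
proof -
  obtain M where "is_maximal_ideal M" and "a \<in> M"
    using nonunit_in_maximal_ideal[OF assms(3)] by blast
  with assms(1,2) show ?thesis by blast
qed

lemma local_one_plus_unit:
  fixes y :: "'a::comm_ring_1"
  assumes "\<exists>!M::'a set. is_maximal_ideal M" and P: "is_maximal_ideal P" and "y \<in> P"
  shows "(1 + y) dvd 1"
proof (rule ccontr)
  note is_maximal_idealD[OF P]
  assume "\<not> (1 + y) dvd 1"
  then have "1 + y \<in> P" by (rule local_nonunit_in_maximal_ideal[OF assms(1,2)])
  moreover have "- y \<in> P" using is_ideal_uminus \<open>is_ideal P\<close> \<open>y \<in> P\<close> .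
  ultimately have "(1 + y) + - y \<in> P" using \<open>is_ideal P\<close> unfolding is_ideal_def by blast
  with \<open>1 \<notin> P\<close> show False by simp
qed

lemma dvd_antimono_chain:
  fixes x :: "nat \<Rightarrow> 'a::comm_monoid_mult"
  assumes "\<And>m. x (Suc m) dvd x m"
  shows "j \<le> k \<Longrightarrow> x k dvd x j"
proof (induction k)
  case (Suc k)
  show ?case
  proof (cases "j = Suc k")
    case False
    with Suc.prems have "x k dvd x j" by (intro Suc.IH) simp
    with assms[of k] show ?thesis by (rule dvd_trans)
  qed simp
qed simp

text \<open>The union of the ideals \<open>(x m)\<close> is principal, and its generator already lies in some \<open>(x k)\<close>.\<close>

lemma pid_dvd_chain_stabilizes:
  fixes x :: "nat \<Rightarrow> 'a::comm_ring_1"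
  assumes pid: "\<forall>I::'a set. is_ideal I \<longrightarrow> (\<exists>a. I = {a * r | r. True})"
    and chain: "\<And>m. x (Suc m) dvd x m"
  shows "\<exists>k. x k dvd x (Suc k)"
proof -
  define U where "U = {r. \<exists>m. x m dvd r}"
  have "is_ideal U" unfolding is_ideal_def U_def
  proof (intro conjI ballI allI impI)
    fix a c assume "a \<in> {r. \<exists>m. x m dvd r}" "c \<in> {r. \<exists>m. x m dvd r}"
    then obtain m1 m2 where "x m1 dvd a" "x m2 dvd c" by blast
    moreover have "x (max m1 m2) dvd x m1" "x (max m1 m2) dvd x m2"
      using dvd_antimono_chain[of x, OF chain] by simp_all
    ultimately have "x (max m1 m2) dvd a" "x (max m1 m2) dvd c"
      using dvd_trans by blast+
    then show "a + c \<in> {r. \<exists>m. x m dvd r}" using dvd_add by blast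
  qed (auto intro: dvd_mult)
  then obtain g where "U = {g * r | r. True}" using pid by blast
  then have g: "U = {r. g dvd r}" by (simp only: principal_ideal_eq_multiples)
  then have "g \<in> U" by simp
  then obtain k where "x k dvd g" unfolding U_def by blast
  moreover have "x (Suc k) \<in> U" unfolding U_def using dvd_refl by blast
  then have "g dvd x (Suc k)" unfolding g by simp
  ultimately show ?thesis using dvd_trans by blast
qed

lemma pid_exact_power_dvd:
  fixes p b :: "'a::idom"
  assumes pid: "\<forall>I::'a set. is_ideal I \<longrightarrow> (\<exists>a. I = {a * r | r. True})"
    and "p \<noteq> 0" and "\<not> p dvd 1" and "b \<noteq> 0"
  shows "\<exists>m. p ^ m dvd b \<and> \<not> p ^ Suc m dvd b"
proof (rule ccontr)
  assume "\<not> ?thesis"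
  then have "p ^ m dvd b" for m by (induction m) auto
  then have "\<forall>m. \<exists>y. b = p ^ m * y" by (meson dvdE)
  then obtain y where y: "\<And>m. b = p ^ m * y m" by metis
  have y_Suc: "y m = p * y (Suc m)" for m
    using y[of m] y[of "Suc m"] \<open>p \<noteq> 0\<close> by (simp add: mult.assoc)
  have "y (Suc m) dvd y m" for m
    unfolding y_Suc[of m] by (rule dvd_triv_right)
  then obtain k where "y k dvd y (Suc k)"
    using pid_dvd_chain_stabilizes[OF pid] by blast
  then have "p * y (Suc k) dvd 1 * y (Suc k)" using y_Suc[of k] by simp
  moreover have "y (Suc k) \<noteq> 0" using y[of "Suc k"] \<open>b \<noteq> 0\<close> by auto
  ultimately have "p dvd 1" by (metis dvd_mult_cancel_right)
  with \<open>\<not> p dvd 1\<close> show False ..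
qed

lemma inj_power_nonunit:
  fixes p :: "'a::idom"
  assumes "p \<noteq> 0" and "\<not> p dvd 1"
  shows "inj (\<lambda>k. p ^ k)"
proof -
  have "p ^ k \<noteq> p ^ j" if "k < j" for k j
  proof
    assume "p ^ k = p ^ j"
    moreover have "p ^ j = p ^ k * p ^ (j - k)"
      using that by (simp flip: power_add)
    ultimately have "p ^ k * 1 = p ^ k * p ^ (j - k)" by simp
    then have "p ^ (j - k) = 1" using \<open>p \<noteq> 0\<close> by simp
    then have "p dvd 1" using that by (metis dvd_power zero_less_diff)
    with assms(2) show False ..
  qed
  then show ?thesis by (metis injI linorder_neqE_nat)
qed

lemma finite_roots_of_unity:
  assumes "n > 0"
  shows "finite {x::'a::idom. x ^ n = 1}"
proof -
  have "{x::'a. x ^ n = 1} = {x. poly (monom 1 n - 1) x = 0}"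
    by (simp add: poly_monom)
  moreover have "coeff (monom (1::'a) n - 1) n = 1" using assms by simp
  ultimately show ?thesis by (metis poly_roots_finite one_neq_zero coeff_0)
qed

lemma unit_power_minus_one_in_H_ideal: "x dvd 1 \<Longrightarrow> x ^ n - 1 \<in> H_ideal n"
  using ideal_gen_superset[of "{x ^ n - 1 | x. x dvd 1}"] unfolding H_ideal_def by blast

lemma n_congruing_imp_H_ideal_subset:
  assumes "is_ideal I" and "n_congruing n I"
  shows "H_ideal n \<subseteq> I"
  unfolding H_ideal_def
proof (rule ideal_gen_least[OF assms(1)], safe)
  fix x :: 'a assume "x dvd 1"
  then obtain v where "1 = x * v" by (elim dvdE)
  then have vx: "v ^ N * x ^ N = 1" for N by (metis mult.commute power_mult_distrib power_one)
  obtain N where "x ^ N * (x ^ n - 1) \<in> I" using assms(2) unfolding n_congruing_def by blast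
  then have "v ^ N * (x ^ N * (x ^ n - 1)) \<in> I" using assms(1) unfolding is_ideal_def by blast
  then show "x ^ n - 1 \<in> I" by (simp add: mult.assoc[symmetric] vx)
qed

lemma n_congruing_if_H_ideal_subset:
  assumes "is_ideal I" and "H_ideal n \<subseteq> I"
    and nonunit_powers: "\<And>a. \<not> a dvd 1 \<Longrightarrow> \<exists>N. a ^ N \<in> I"
  shows "n_congruing n I"
  unfolding n_congruing_def
proof
  fix a
  show "\<exists>N. a ^ N * (a ^ n - 1) \<in> I"
  proof (cases "a dvd 1")
    case True
    then have "a ^ n - 1 \<in> H_ideal n" by (rule unit_power_minus_one_in_H_ideal)
    with assms(2) show ?thesis by (intro exI[of _ 0]) auto
  next
    case False
    then obtain N where "a ^ N \<in> I" using nonunit_powers by blast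
    then have "a ^ N * (a ^ n - 1) \<in> I" by (rule is_ideal_mult_right[OF assms(1)])
    then show ?thesis ..
  qed
qed

lemma
  assumes "dvr TYPE('a::idom)"
  shows dvr_ideals_principal: "\<forall>I::'a set. is_ideal I \<longrightarrow> (\<exists>a. I = {a * r | r. True})"
    and dvr_unique_maximal_ideal: "\<exists>!M::'a set. is_maximal_ideal M"
    and dvr_not_field: "\<exists>x::'a. x \<noteq> 0 \<and> \<not> x dvd 1"
  using assms unfolding dvr_def by auto

lemma dvr_uniformizer:
  assumes dvr: "dvr TYPE('a)"
  obtains P and p :: "'a::idom"
  where "is_maximal_ideal P" and "P = {p * r | r. True}" and "p \<noteq> 0" and "\<not> p dvd 1"
proof -
  obtain P :: "'a set" where P: "is_maximal_ideal P"
    using ex1_implies_ex[OF dvr_unique_maximal_ideal[OF dvr]] by (rule exE)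
  obtain x :: 'a where "x \<noteq> 0" and "\<not> x dvd 1"
    using dvr_not_field[OF dvr] by blast
  then have "x \<in> P" by (intro local_nonunit_in_maximal_ideal[OF dvr_unique_maximal_ideal[OF dvr] P])
  obtain p where Pp: "P = {p * r | r. True}"
    using dvr_ideals_principal[OF dvr] is_maximal_idealD(1)[OF P] by blast
  have "\<not> p dvd 1"
    using is_maximal_idealD(2)[OF P] unfolding Pp by auto
  moreover have "p \<noteq> 0" using \<open>x \<noteq> 0\<close> \<open>x \<in> P\<close> unfolding Pp by auto
  ultimately show ?thesis using P Pp that by blast
qed

lemma dvr_nonzero_ideal_eq_power:
  fixes I :: "'a::idom set"
  assumes dvr: "dvr TYPE('a)" and P: "is_maximal_ideal P" and Pp: "P = {p * r | r. True}"
    and "p \<noteq> 0" and "\<not> p dvd 1" and "is_ideal I" and "I \<noteq> {0}"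
  obtains m where "I = {x. p ^ m dvd x}"
proof -
  obtain b where "I = {b * r | r. True}" using dvr_ideals_principal[OF dvr] \<open>is_ideal I\<close> by blast
  then have Ib: "I = {x. b dvd x}" by (simp only: principal_ideal_eq_multiples)
  with \<open>I \<noteq> {0}\<close> have "b \<noteq> 0" by auto
  then obtain m where "p ^ m dvd b" and "\<not> p ^ Suc m dvd b"
    using pid_exact_power_dvd[OF dvr_ideals_principal[OF dvr] \<open>p \<noteq> 0\<close> \<open>\<not> p dvd 1\<close>] by blast
  then obtain u where b: "b = p ^ m * u" and "\<not> p dvd u"
    by (metis dvdE dvd_mult_cancel_left power_Suc2)
  have "u dvd 1"
  proof (rule ccontr)
    assume "\<not> u dvd 1"
    then have "u \<in> P" by (rule local_nonunit_in_maximal_ideal[OF dvr_unique_maximal_ideal[OF dvr] P])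
    with \<open>\<not> p dvd u\<close> show False unfolding Pp by auto
  qed
  then obtain w where w: "1 = u * w" by (elim dvdE)
  have "p ^ m * u dvd x \<longleftrightarrow> p ^ m dvd x" for x
  proof
    assume "p ^ m dvd x"
    then obtain k where "x = p ^ m * k" ..
    then have "x = p ^ m * u * (w * k)" by (metis w mult.assoc mult.left_neutral)
    then show "p ^ m * u dvd x" ..
  qed (rule dvd_mult_left)
  then have "I = {x. p ^ m dvd x}" unfolding Ib b by (simp add: set_eq_iff)
  then show ?thesis by (rule that)
qed

lemma dvr_nonzero_ideal_contains_powers:
  fixes I :: "'a::idom set"
  assumes dvr: "dvr TYPE('a)" and "is_ideal I" and "I \<noteq> {0}" and "\<not> a dvd 1"
  shows "\<exists>N. a ^ N \<in> I"
proof -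
  obtain P and p :: 'a where P: "is_maximal_ideal P" and Pp: "P = {p * r | r. True}"
    and "p \<noteq> 0" and "\<not> p dvd 1"
    by (rule dvr_uniformizer[OF dvr])
  obtain m where Im: "I = {x. p ^ m dvd x}"
    by (rule dvr_nonzero_ideal_eq_power[OF dvr P Pp \<open>p \<noteq> 0\<close> \<open>\<not> p dvd 1\<close> assms(2,3)])
  obtain c where "a = p * c"
    using local_nonunit_in_maximal_ideal[OF dvr_unique_maximal_ideal[OF dvr] P \<open>\<not> a dvd 1\<close>]
    unfolding Pp by blast
  then have "a ^ m \<in> I" unfolding Im by (simp add: power_mult_distrib)
  then show ?thesis ..
qed

lemma dvr_H_ideal_not_subset_zero:
  fixes n :: nat
  assumes dvr: "dvr TYPE('a::idom)" and "n > 0"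
  shows "\<not> H_ideal n \<subseteq> {0::'a}"
proof
  assume H0: "H_ideal n \<subseteq> {0::'a}"
  obtain P and p :: 'a where P: "is_maximal_ideal P" and Pp: "P = {p * r | r. True}"
    and "p \<noteq> 0" and "\<not> p dvd 1"
    by (rule dvr_uniformizer[OF dvr])
  have "(1 + p ^ Suc k) ^ n = 1" for k
  proof -
    have "(1 + p ^ Suc k) dvd 1"
      using local_one_plus_unit[OF dvr_unique_maximal_ideal[OF dvr] P] unfolding Pp by auto
    then have "(1 + p ^ Suc k) ^ n - 1 \<in> H_ideal n" by (rule unit_power_minus_one_in_H_ideal)
    with H0 show ?thesis by auto
  qed
  then have "range (\<lambda>k. 1 + p ^ Suc k) \<subseteq> {x. x ^ n = 1}" by auto
  moreover have "inj (\<lambda>k. 1 + p ^ Suc k)"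
  proof (rule injI)
    fix k j assume "1 + p ^ Suc k = 1 + p ^ Suc j"
    then have "Suc k = Suc j"
      by (intro injD[OF inj_power_nonunit[OF \<open>p \<noteq> 0\<close> \<open>\<not> p dvd 1\<close>]]) simp
    then show "k = j" ..
  qed
  ultimately show False
    using finite_roots_of_unity[OF \<open>n > 0\<close>] range_inj_infinite finite_subset by blast
qed

theorem mainTheorem12:
  fixes P :: "'a::idom set" and n :: nat and I :: "'a set"
  assumes "dvr TYPE('a)"
    and "is_maximal_ideal P"
    and "padic_complete P"
    and "n > 0"
    and "is_ideal I"
  shows "n_congruing n I \<longleftrightarrow> H_ideal n \<subseteq> I"
proof
  assume "n_congruing n I"
  then show "H_ideal n \<subseteq> I" using n_congruing_imp_H_ideal_subset assms(5) by blast
next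
  assume H: "H_ideal n \<subseteq> I"
  then have "I \<noteq> {0}" using dvr_H_ideal_not_subset_zero[OF assms(1,4)] by blast
  then show "n_congruing n I"
    using n_congruing_if_H_ideal_subset[OF assms(5) H]
      dvr_nonzero_ideal_contains_powers[OF assms(1,5)] by blast
qed

end
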